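(* Let $p\ge1$, $k\ge1$, $r\in\{0,\dots,p-1\}$, $\alpha\in\mathbb R^{p\times r}$ with $\operatorname{rank}\alpha=r$, $\bar b<\infty$ and $\bar\rho<1$. Let $\mathcal B\subset\mathbb R^{kp\times[p(k-1)+r]}$ be closed with $\max_{\boldsymbol\beta\in\mathcal B}\|\boldsymbol\beta\|\le\bar b$ and $\rho_{JSR}(\{I_{p(k-1)+r}+\boldsymbol\beta^\top\boldsymbol\alpha:\boldsymbol\beta\in\mathcal B\})\le\bar\rho$. Then for every $\boldsymbol\beta\in\mathcal B$ the $kp\times kp$ matrix $\begin{bmatrix}\boldsymbol\alpha_\perp^\top\\\boldsymbol\beta^\top\end{bmatrix}$ is invertible, and $$\sup_{\boldsymbol\beta\in\mathcal B}\left\|\begin{bmatrix}\boldsymbol\alpha_\perp^\top\\\boldsymbol\beta^\top\end{bmatrix}^{-1}\right\|<\infty.$$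
   Context: $D\in\mathbb R^{p(k-1)\times p(k-1)}$ has $-I_p$ diagonal blocks, $I_p$ blocks immediately above the diagonal, zeros elsewhere (blocks empty when $k=1$); $E=(I_p,0_{p\times p(k-2)})^\top\in\mathbb R^{p(k-1)\times p}$. $\alpha_\perp$ is a $p\times(p-r)$ matrix of rank $p-r$ with $\alpha_\perp^\top\alpha=0$. $\boldsymbol\alpha=\begin{bmatrix}\alpha & E^\top\\ 0 & I_{p(k-1)}\end{bmatrix}\in\mathbb R^{kp\times[r+p(k-1)]}$ and $\boldsymbol\alpha_\perp=\begin{bmatrix}I_p\\-E\end{bmatrix}\alpha_\perp\in\mathbb R^{kp\times(p-r)}$. Joint spectral radius: $\rho_{JSR}(\mathcal A)=\limsup_{t}\sup\{\rho(M_1\cdots M_t)^{1/t}:M_s\in\mathcal A\}$, $\rho$ the spectral radius. Matrix norms are operator norms induced by the Euclidean norm. *)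

theory Defs
  imports "HOL-Analysis.Analysis" "Jordan_Normal_Form.Spectral_Radius" "Jordan_Normal_Form.DL_Rank"
    "Jordan_Normal_Form.Gauss_Jordan_Elimination"
begin

definition vnorm :: "real vec \<Rightarrow> real" where
  "vnorm v = sqrt (\<Sum>i<dim_vec v. (v $ i)^2)"

definition op_norm :: "real mat \<Rightarrow> real" where
  "op_norm A = Sup {vnorm (A *\<^sub>v x) | x. x \<in> carrier_vec (dim_col A) \<and> vnorm x \<le> 1}"

definition rspec_rad :: "real mat \<Rightarrow> real" where
  "rspec_rad A = spectral_radius (map_mat complex_of_real A)"

definition jsr :: "nat \<Rightarrow> real mat set \<Rightarrow> ereal" where
  "jsr n S = limsup (\<lambda>t. SUP Ms \<in> {Ms. length Ms = t \<and> set Ms \<subseteq> S}.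
      ereal (rspec_rad (foldr (*) Ms (1\<^sub>m n)) powr (1 / real t)))"

definition closed_mat_set :: "nat \<Rightarrow> nat \<Rightarrow> real mat set \<Rightarrow> bool" where
  "closed_mat_set nr nc S \<longleftrightarrow> S \<subseteq> carrier_mat nr nc \<and>
     (\<forall>X L. (\<forall>m. X m \<in> S) \<longrightarrow> L \<in> carrier_mat nr nc \<longrightarrow>
        (\<forall>i<nr. \<forall>j<nc. (\<lambda>m. X m $$ (i,j)) \<longlonglongrightarrow> L $$ (i,j)) \<longrightarrow> L \<in> S)"

definition E_mat :: "nat \<Rightarrow> nat \<Rightarrow> real mat" where
  "E_mat p k = mat (p*(k-1)) p (\<lambda>(i,j). if i = j then 1 else 0)"

definition bold_alpha :: "nat \<Rightarrow> nat \<Rightarrow> real mat \<Rightarrow> real mat" where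
  "bold_alpha p k \<alpha> = four_block_mat \<alpha> (transpose_mat (E_mat p k))
      (0\<^sub>m (p*(k-1)) (dim_col \<alpha>)) (1\<^sub>m (p*(k-1)))"

definition bold_alpha_perp :: "nat \<Rightarrow> nat \<Rightarrow> real mat \<Rightarrow> real mat" where
  "bold_alpha_perp p k \<alpha>perp = ((1\<^sub>m p) @\<^sub>r (- E_mat p k)) * \<alpha>perp"

end

theory Submission
  imports Defs
begin

(* Write G(beta) for the stacked matrix [bold_alpha_perp^T; beta^T].  If G(beta) x = 0, then
   x lies in the kernel of bold_alpha_perp^T, which is the column space of bold_alpha, so
   x = bold_alpha y; and beta^T bold_alpha y = 0 makes y a fixed vector of
   M = I + beta^T bold_alpha.  A fixed vector of M is fixed by every power of M, so every term in
   the limsup defining the joint spectral radius is at least 1; since jsr < 1, y = 0 and G(beta)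
   is invertible.

   B is closed and, by the operator norm bound, has bounded entries, so it is sequentially
   compact; det G(beta) is continuous in beta and never zero, hence bounded away from zero on B.
   Cramer's rule (inverse = adjugate / determinant) then bounds the entries, and with them the
   operator norms, of all the inverses uniformly. *)


section \<open>Euclidean and operator norms\<close>

lemma abs_index_le_vnorm: "j < dim_vec x \<Longrightarrow> \<bar>x $ j\<bar> \<le> vnorm x"
proof -
  assume j: "j < dim_vec x"
  have "(x $ j)\<^sup>2 \<le> (\<Sum>i<dim_vec x. (x $ i)\<^sup>2)"
    by (rule member_le_sum) (use j in auto)
  then show ?thesis
    unfolding vnorm_def by (metis real_sqrt_abs real_sqrt_le_mono)
qed

lemma vnorm_le_sum_abs: "vnorm x \<le> (\<Sum>i<dim_vec x. \<bar>x $ i\<bar>)"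
  unfolding vnorm_def using L2_set_le_sum_abs[of "\<lambda>i. x $ i" "{..<dim_vec x}"]
  by (simp add: L2_set_def)

lemma vnorm_mult_mat_vec_le:
  assumes A: "A \<in> carrier_mat nr nc" and c: "0 \<le> c"
    and bnd: "\<And>i j. i < nr \<Longrightarrow> j < nc \<Longrightarrow> \<bar>A $$ (i,j)\<bar> \<le> c"
    and x: "x \<in> carrier_vec nc" "vnorm x \<le> 1"
  shows "vnorm (A *\<^sub>v x) \<le> real nr * real nc * c"
proof -
  have row: "\<bar>(A *\<^sub>v x) $ i\<bar> \<le> real nc * c" if i: "i < nr" for i
  proof -
    have "\<bar>(A *\<^sub>v x) $ i\<bar> = \<bar>\<Sum>j<nc. A $$ (i,j) * x $ j\<bar>"
      using A x i unfolding lessThan_atLeast0 by (auto simp: scalar_prod_def intro!: sum.cong)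
    also have "\<dots> \<le> (\<Sum>j<nc. \<bar>A $$ (i,j)\<bar> * \<bar>x $ j\<bar>)"
      by (rule order_trans[OF sum_abs]) (simp add: abs_mult)
    also have "\<dots> \<le> (\<Sum>j<nc. c)"
    proof (rule sum_mono)
      fix j assume j: "j \<in> {..<nc}"
      have "\<bar>x $ j\<bar> \<le> 1"
        using abs_index_le_vnorm[of j x] x j by (simp add: carrier_vecD)
      from mult_mono[OF bnd[OF i] this c abs_ge_zero] j
      show "\<bar>A $$ (i,j)\<bar> * \<bar>x $ j\<bar> \<le> c" by simp
    qed
    finally show ?thesis by simp
  qed
  have "vnorm (A *\<^sub>v x) \<le> (\<Sum>i<nr. \<bar>(A *\<^sub>v x) $ i\<bar>)"
    using vnorm_le_sum_abs[of "A *\<^sub>v x"] A by simp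
  also have "\<dots> \<le> (\<Sum>i<nr. real nc * c)"
    by (rule sum_mono) (use row in auto)
  finally show ?thesis by simp
qed

lemma op_norm_le_of_abs_index_le:
  assumes A: "A \<in> carrier_mat nr nc" and c: "0 \<le> c"
    and bnd: "\<And>i j. i < nr \<Longrightarrow> j < nc \<Longrightarrow> \<bar>A $$ (i,j)\<bar> \<le> c"
  shows "op_norm A \<le> real nr * real nc * c"
  unfolding op_norm_def
proof (rule cSup_least)
  have "vnorm (0\<^sub>v nc) \<le> 1" by (simp add: vnorm_def)
  then have "vnorm (A *\<^sub>v 0\<^sub>v nc) \<in> {vnorm (A *\<^sub>v x) |x. x \<in> carrier_vec (dim_col A) \<and> vnorm x \<le> 1}"
    using A by fastforce
  then show "{vnorm (A *\<^sub>v x) |x. x \<in> carrier_vec (dim_col A) \<and> vnorm x \<le> 1} \<noteq> {}"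
    by blast
next
  fix y assume "y \<in> {vnorm (A *\<^sub>v x) |x. x \<in> carrier_vec (dim_col A) \<and> vnorm x \<le> 1}"
  then obtain x where "x \<in> carrier_vec nc" "vnorm x \<le> 1" "y = vnorm (A *\<^sub>v x)"
    using A by auto
  then show "y \<le> real nr * real nc * c" using vnorm_mult_mat_vec_le[OF A c bnd] by blast
qed

lemma abs_index_le_op_norm:
  assumes i: "i < dim_row A" and j: "j < dim_col A"
  shows "\<bar>A $$ (i,j)\<bar> \<le> op_norm A"
proof -
  have A: "A \<in> carrier_mat (dim_row A) (dim_col A)" by simp
  define c where "c = Max (insert 0 (abs ` elements_mat A))"
  have fin: "finite (insert 0 (abs ` elements_mat A))" by (simp add: elements_mat_def)
  have c: "0 \<le> c" unfolding c_def using fin by simp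
  have bnd: "\<bar>A $$ (i',j')\<bar> \<le> c" if "i' < dim_row A" "j' < dim_col A" for i' j'
    unfolding c_def using fin that by (intro Max_ge) auto
  have bdd: "bdd_above {vnorm (A *\<^sub>v x) |x. x \<in> carrier_vec (dim_col A) \<and> vnorm x \<le> 1}"
  proof (rule bdd_aboveI)
    fix y assume "y \<in> {vnorm (A *\<^sub>v x) |x. x \<in> carrier_vec (dim_col A) \<and> vnorm x \<le> 1}"
    then obtain x where "x \<in> carrier_vec (dim_col A)" "vnorm x \<le> 1" "y = vnorm (A *\<^sub>v x)"
      by auto
    then show "y \<le> real (dim_row A) * real (dim_col A) * c"
      using vnorm_mult_mat_vec_le[OF A c bnd] by simp
  qed
  let ?e = "unit_vec (dim_col A) j :: real vec"
  have "(\<Sum>l<dim_col A. (?e $ l)\<^sup>2) = (\<Sum>l<dim_col A. if l = j then 1 else 0)"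
    by (rule sum.cong) (auto simp: unit_vec_def)
  then have "vnorm ?e = 1" unfolding vnorm_def using j by simp
  moreover have "(A *\<^sub>v ?e) $ i = A $$ (i,j)" using i j by simp
  ultimately have "\<bar>A $$ (i,j)\<bar> \<le> vnorm (A *\<^sub>v ?e)"
    using abs_index_le_vnorm[of i "A *\<^sub>v ?e"] i by simp
  also have "\<dots> \<le> op_norm A"
    unfolding op_norm_def by (rule cSup_upper[OF _ bdd]) (use \<open>vnorm ?e = 1\<close> in auto)
  finally show ?thesis .
qed

section \<open>Spectral radius and joint spectral radius\<close>

lemma abs_eigenvalue_le_rspec_rad:
  assumes A: "A \<in> carrier_mat n n" and ev: "eigenvalue A c"
  shows "\<bar>c\<bar> \<le> rspec_rad A"
proof -
  have n: "n > 0"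
    using ev A unfolding eigenvalue_def eigenvector_def by (cases n) auto
  have "eigenvalue (map_mat complex_of_real A) (complex_of_real c)"
    by (rule of_real_hom.eigenvalue_hom[OF A ev])
  then have "norm (complex_of_real c) \<in> norm ` spectrum (map_mat complex_of_real A)"
    unfolding spectrum_def by (intro imageI) simp
  then show ?thesis
    unfolding rspec_rad_def using spectral_radius_mem_max(2)[OF map_carrier_mat[THEN iffD2, OF A] n] by simp
qed

lemma foldr_mult_fixed_vec:
  fixes Ms :: "real mat list"
  assumes "set Ms \<subseteq> carrier_mat n n" and "\<forall>M\<in>set Ms. M *\<^sub>v y = y" and y: "y \<in> carrier_vec n"
  shows "foldr (*) Ms (1\<^sub>m n) \<in> carrier_mat n n \<and> foldr (*) Ms (1\<^sub>m n) *\<^sub>v y = y"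
  using assms(1,2)
proof (induction Ms)
  case Nil
  show ?case using y by simp
next
  case (Cons M Ms)
  then have M: "M \<in> carrier_mat n n" and P: "foldr (*) Ms (1\<^sub>m n) \<in> carrier_mat n n"
    and Py: "foldr (*) Ms (1\<^sub>m n) *\<^sub>v y = y" by auto
  then show ?case using Cons.prems assoc_mult_mat_vec[OF M P y] by simp
qed

lemma one_le_jsr_if_eigenvalue_one:
  assumes M: "M \<in> S" "M \<in> carrier_mat n n" and ev: "eigenvalue M 1"
  shows "1 \<le> jsr n S"
proof -
  obtain y where y: "y \<in> carrier_vec n" "y \<noteq> 0\<^sub>v n" "M *\<^sub>v y = y"
    using ev M(2) unfolding eigenvalue_def eigenvector_def by auto
  have "(1::ereal) \<le> (SUP Ms \<in> {Ms. length Ms = t \<and> set Ms \<subseteq> S}.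
      ereal (rspec_rad (foldr (*) Ms (1\<^sub>m n)) powr (1 / real t)))" for t
  proof -
    let ?P = "foldr (*) (replicate t M) (1\<^sub>m n)"
    have P: "?P \<in> carrier_mat n n \<and> ?P *\<^sub>v y = y"
      by (rule foldr_mult_fixed_vec) (use M(2) y in auto)
    then have "eigenvalue ?P 1"
      unfolding eigenvalue_def eigenvector_def using y by auto
    then have "1 \<le> rspec_rad ?P" using abs_eigenvalue_le_rspec_rad[of ?P n 1] P by simp
    then have "1 \<le> rspec_rad ?P powr (1 / real t)" by (intro ge_one_powr_ge_zero) auto
    then show ?thesis by (intro SUP_upper2[of "replicate t M"]) (use M in auto)
  qed
  then show ?thesis unfolding jsr_def by (intro le_Limsup) auto
qed

lemma mult_mat_vec_zero [simp]:
  "A \<in> carrier_mat nr nc \<Longrightarrow> A *\<^sub>v 0\<^sub>v nc = (0\<^sub>v nr :: 'a :: semiring_0 vec)"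
  by (rule eq_vecI) (auto simp: scalar_prod_def)

lemma zero_mult_mat_vec [simp]:
  "v \<in> carrier_vec nc \<Longrightarrow> 0\<^sub>m nr nc *\<^sub>v v = (0\<^sub>v nr :: 'a :: semiring_0 vec)"
  by (rule eq_vecI) (auto simp: scalar_prod_def)

lemma transpose_append_rows_mult_vec:
  assumes A: "A \<in> carrier_mat nr1 nc" and B: "B \<in> carrier_mat nr2 nc"
    and a: "a \<in> carrier_vec nr1" and b: "b \<in> carrier_vec nr2"
  shows "transpose_mat (A @\<^sub>r B) *\<^sub>v (a @\<^sub>v b) = transpose_mat A *\<^sub>v a + transpose_mat B *\<^sub>v b"
proof -
  have "transpose_mat (A @\<^sub>r B)
      = four_block_mat (transpose_mat A) (transpose_mat B) (0\<^sub>m 0 nr1) (0\<^sub>m 0 nr2)"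
    unfolding append_rows_def using A B by (subst transpose_four_block_mat) auto
  moreover have "v @\<^sub>v w = v" if "w \<in> carrier_vec 0" for v w :: "'a vec"
    using that by (intro eq_vecI) auto
  ultimately show ?thesis
    using four_block_mat_mult_vec[of "transpose_mat A" nc nr1 "transpose_mat B" nr2 "0\<^sub>m 0 nr1" 0
        "0\<^sub>m 0 nr2" a b] A B a b
    by simp
qed

lemma index_append_rows_transpose:
  assumes "T \<in> carrier_mat q n" "B \<in> carrier_mat n nc" "i < q + nc" "j < n"
  shows "(T @\<^sub>r transpose_mat B) $$ (i,j) = (if i < q then T $$ (i,j) else B $$ (j, i - q))"
  using assms unfolding append_rows_def by auto

lemma full_col_rank_mult_vec_eq_0_imp:
  fixes A :: "real mat"
  assumes A: "A \<in> carrier_mat n nc" and rk: "vec_space.rank n A = nc"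
    and v: "v \<in> carrier_vec nc" and Av: "A *\<^sub>v v = 0\<^sub>v n"
  shows "v = 0\<^sub>v nc"
proof (rule ccontr)
  interpret vec_space "TYPE(real)" n .
  assume v0: "v \<noteq> 0\<^sub>v nc"
  show False
  proof (cases "distinct (cols A)")
    case True
    then show False using full_rank_lin_indpt[OF A rk True] lin_depI[OF A v v0 Av True] by blast
  next
    case False
    obtain S where S: "maximal S (\<lambda>T. T \<subseteq> set (cols A) \<and> lin_indpt T)"
      using maximal_exists[of "\<lambda>T. T \<subseteq> set (cols A) \<and> lin_indpt T" "card (set (cols A))" "{}"]
      by (meson List.finite_set card_mono empty_iff empty_subsetI finite_lin_indpt2 rev_finite_subset)
    then have "card S \<le> card (set (cols A))" by (simp add: card_mono maximal_def)
    also have "\<dots> < nc"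
      using False A by (metis card_distinct card_length carrier_matD(2) cols_length nat_less_le)
    finally show False using rank_card_indpt[OF A S] rk by simp
  qed
qed

lemma transpose_mult_self_vec_eq_0_imp:
  fixes A :: "real mat"
  assumes A: "A \<in> carrier_mat n m" and v: "v \<in> carrier_vec m"
    and z: "transpose_mat A *\<^sub>v (A *\<^sub>v v) = 0\<^sub>v m"
  shows "A *\<^sub>v v = 0\<^sub>v n"
proof -
  have "(A *\<^sub>v v) \<bullet> (A *\<^sub>v v) = (transpose_mat A *\<^sub>v (A *\<^sub>v v)) \<bullet> v"
    by (rule transpose_vec_mult_scalar[symmetric]) (use A v in auto)
  then have "(A *\<^sub>v v) \<bullet>c (A *\<^sub>v v) = 0" using z v by simp
  then show ?thesis using conjugate_square_eq_0_vec[OF mult_mat_vec_carrier[OF A v]] by simp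
qed

lemma inverts_mat_scaled_adj_mat:
  fixes A :: "'a :: field mat"
  assumes A: "A \<in> carrier_mat n n" and d: "det A \<noteq> 0"
  shows "inverts_mat A ((1 / det A) \<cdot>\<^sub>m adj_mat A)"
    and "inverts_mat ((1 / det A) \<cdot>\<^sub>m adj_mat A) A"
proof -
  have scale: "(1 / det A) \<cdot>\<^sub>m (det A \<cdot>\<^sub>m 1\<^sub>m n) = 1\<^sub>m n"
    using d by (intro eq_matI) auto
  show "inverts_mat A ((1 / det A) \<cdot>\<^sub>m adj_mat A)"
    unfolding inverts_mat_def using A adj_mat[OF A] scale by (simp add: mult_smult_distrib)
  show "inverts_mat ((1 / det A) \<cdot>\<^sub>m adj_mat A) A"
    unfolding inverts_mat_def using A adj_mat[OF A] scale by (simp add: mult_smult_assoc_mat)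
qed

lemma invertible_mat_if_det_ne_0:
  fixes A :: "'a :: field mat"
  assumes "A \<in> carrier_mat n n" and "det A \<noteq> 0"
  shows "invertible_mat A"
  using inverts_mat_scaled_adj_mat[OF assms] assms(1)
  unfolding invertible_mat_def by (auto simp: square_mat.simps)

lemma inverse_eq_scaled_adj_mat:
  fixes A N :: "'a :: field mat"
  assumes A: "A \<in> carrier_mat n n" and AN: "inverts_mat A N" and NA: "inverts_mat N A"
  shows "det A \<noteq> 0" and "N = (1 / det A) \<cdot>\<^sub>m adj_mat A"
proof -
  have AN': "A * N = 1\<^sub>m n" and NA': "N * A = 1\<^sub>m (dim_row N)"
    using AN NA A unfolding inverts_mat_def by auto
  have N: "N \<in> carrier_mat n n"
    using arg_cong[OF AN', of dim_col] arg_cong[OF NA', of dim_col] A by auto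
  have "det A * det N = 1" using det_mult[OF A N] AN' by simp
  then show d: "det A \<noteq> 0" by auto
  let ?Ai = "(1 / det A) \<cdot>\<^sub>m adj_mat A"
  have Ai: "?Ai \<in> carrier_mat n n" using adj_mat(1)[OF A] by simp
  have "N = N * (A * ?Ai)"
    using inverts_mat_scaled_adj_mat(1)[OF A d] N A unfolding inverts_mat_def by simp
  also have "\<dots> = (N * A) * ?Ai" using assoc_mult_mat[OF N A Ai] by simp
  also have "\<dots> = ?Ai" using NA' N left_mult_one_mat[OF Ai] by simp
  finally show "N = ?Ai" .
qed

lemma mult_mat_vec_surj_if_det_ne_0:
  fixes A :: "'a :: field mat"
  assumes A: "A \<in> carrier_mat n n" and d: "det A \<noteq> 0" and z: "z \<in> carrier_vec n"
  shows "\<exists>v\<in>carrier_vec n. A *\<^sub>v v = z"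
proof
  let ?Ai = "(1 / det A) \<cdot>\<^sub>m adj_mat A"
  have Ai: "?Ai \<in> carrier_mat n n" using adj_mat(1)[OF A] by simp
  then show "?Ai *\<^sub>v z \<in> carrier_vec n" using z by simp
  have "A *\<^sub>v (?Ai *\<^sub>v z) = (A * ?Ai) *\<^sub>v z" by (rule assoc_mult_mat_vec[OF A Ai z, symmetric])
  also have "A * ?Ai = 1\<^sub>m n"
    using inverts_mat_scaled_adj_mat(1)[OF A d] A unfolding inverts_mat_def by simp
  finally show "A *\<^sub>v (?Ai *\<^sub>v z) = z" using z by simp
qed

lemma orthogonal_complement_coeff_eq_0:
  fixes \<alpha> \<alpha>p :: "real mat"
  assumes \<alpha>: "\<alpha> \<in> carrier_mat p r" and \<alpha>p: "\<alpha>p \<in> carrier_mat p q" "vec_space.rank p \<alpha>p = q"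
    and orth: "transpose_mat \<alpha>p * \<alpha> = 0\<^sub>m q r"
    and a: "a \<in> carrier_vec r" and d: "d \<in> carrier_vec q"
    and h: "transpose_mat \<alpha>p *\<^sub>v (\<alpha> *\<^sub>v a + \<alpha>p *\<^sub>v d) = 0\<^sub>v q"
  shows "d = 0\<^sub>v q"
proof -
  have "transpose_mat \<alpha>p *\<^sub>v (\<alpha> *\<^sub>v a) = 0\<^sub>v q"
    using assoc_mult_mat_vec[of "transpose_mat \<alpha>p" q p \<alpha> r a] orth \<alpha> \<alpha>p a by simp
  then have "transpose_mat \<alpha>p *\<^sub>v (\<alpha>p *\<^sub>v d) = 0\<^sub>v q"
    using h mult_add_distrib_mat_vec[of "transpose_mat \<alpha>p" q p "\<alpha> *\<^sub>v a" "\<alpha>p *\<^sub>v d"] \<alpha> \<alpha>p a d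
    by simp
  then have "\<alpha>p *\<^sub>v d = 0\<^sub>v p" by (rule transpose_mult_self_vec_eq_0_imp[OF \<alpha>p(1) d])
  then show ?thesis by (rule full_col_rank_mult_vec_eq_0_imp[OF \<alpha>p d])
qed

lemma orthogonal_complement_kernel_subset_range:
  fixes \<alpha> \<alpha>p :: "real mat"
  assumes \<alpha>: "\<alpha> \<in> carrier_mat p r" "vec_space.rank p \<alpha> = r"
    and \<alpha>p: "\<alpha>p \<in> carrier_mat p q" "vec_space.rank p \<alpha>p = q"
    and pq: "p = r + q" and orth: "transpose_mat \<alpha>p * \<alpha> = 0\<^sub>m q r"
    and z: "z \<in> carrier_vec p" "transpose_mat \<alpha>p *\<^sub>v z = 0\<^sub>v q"
  shows "\<exists>w\<in>carrier_vec r. z = \<alpha> *\<^sub>v w"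
proof -
  \<comment> \<open>\<open>Q = [\<alpha>, \<alpha>p]\<close>, whose columns turn out to be a basis of \<open>\<real>\<^sup>p\<close>\<close>
  define Q where "Q = transpose_mat (transpose_mat \<alpha> @\<^sub>r transpose_mat \<alpha>p)"
  have Q: "Q \<in> carrier_mat p p" unfolding Q_def using \<alpha> \<alpha>p pq by auto
  have Q_mult: "Q *\<^sub>v v = \<alpha> *\<^sub>v vec_first v r + \<alpha>p *\<^sub>v vec_last v q" if v: "v \<in> carrier_vec p" for v
  proof -
    have "v = vec_first v r @\<^sub>v vec_last v q" using v pq by simp
    then show ?thesis
      unfolding Q_def using \<alpha> \<alpha>p
      by (metis transpose_append_rows_mult_vec transpose_carrier_mat transpose_transpose
          vec_first_carrier vec_last_carrier)
  qed
  note coeff_eq_0 = orthogonal_complement_coeff_eq_0[OF \<alpha>(1) \<alpha>p orth vec_first_carrier vec_last_carrier]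
  have "det Q \<noteq> 0"
  proof -
    have "v = 0\<^sub>v p" if v: "v \<in> carrier_vec p" and Qv: "Q *\<^sub>v v = 0\<^sub>v p" for v
    proof -
      have "transpose_mat \<alpha>p *\<^sub>v 0\<^sub>v p = 0\<^sub>v q" using \<alpha>p(1) by simp
      then have "vec_last v q = 0\<^sub>v q" using coeff_eq_0[of v v] Qv Q_mult[OF v] by simp
      moreover from this have "\<alpha> *\<^sub>v vec_first v r = 0\<^sub>v p" using Qv Q_mult[OF v] \<alpha> \<alpha>p by simp
      then have "vec_first v r = 0\<^sub>v r" by (rule full_col_rank_mult_vec_eq_0_imp[OF \<alpha> vec_first_carrier])
      ultimately have "v = 0\<^sub>v r @\<^sub>v 0\<^sub>v q" using v pq by (metis vec_first_last_append)
      then show ?thesis using pq by (intro eq_vecI) auto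
    qed
    then show ?thesis using det_0_iff_vec_prod_zero_field[OF Q] by blast
  qed
  then obtain v where v: "v \<in> carrier_vec p" and Qv: "Q *\<^sub>v v = z"
    using mult_mat_vec_surj_if_det_ne_0[OF Q _ z(1)] by blast
  then have "vec_last v q = 0\<^sub>v q" using coeff_eq_0[of v v] Q_mult[OF v] z(2) by simp
  then show ?thesis using Qv Q_mult[OF v] \<alpha> \<alpha>p by (intro bexI[of _ "vec_first v r"]) auto
qed

section \<open>Invertibility of the stacked matrix\<close>

lemma bold_alpha_carrier:
  "k \<ge> 1 \<Longrightarrow> \<alpha> \<in> carrier_mat p r \<Longrightarrow> bold_alpha p k \<alpha> \<in> carrier_mat (k * p) (p * (k - 1) + r)"
  unfolding bold_alpha_def E_mat_def by (cases k) (auto simp: add.commute)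

lemma bold_alpha_perp_carrier:
  assumes "k \<ge> 1" and "\<alpha>p \<in> carrier_mat p q"
  shows "bold_alpha_perp p k \<alpha>p \<in> carrier_mat (k * p) q"
proof -
  have "1\<^sub>m p @\<^sub>r - E_mat p k \<in> carrier_mat (p + p * (k - 1)) p" unfolding E_mat_def by auto
  moreover have "p + p * (k - 1) = k * p" using assms(1) by (cases k) auto
  ultimately show ?thesis unfolding bold_alpha_perp_def using assms(2) by (metis mult_carrier_mat)
qed

lemma bold_alpha_perp_kernel_subset_range:
  fixes \<alpha> \<alpha>p :: "real mat"
  assumes k: "k \<ge> 1" and rp: "r \<le> p"
    and \<alpha>: "\<alpha> \<in> carrier_mat p r" "vec_space.rank p \<alpha> = r"
    and \<alpha>p: "\<alpha>p \<in> carrier_mat p (p - r)" "vec_space.rank p \<alpha>p = p - r"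
    and orth: "transpose_mat \<alpha>p * \<alpha> = 0\<^sub>m (p - r) r"
    and x: "x \<in> carrier_vec (k * p)"
    and hx: "transpose_mat (bold_alpha_perp p k \<alpha>p) *\<^sub>v x = 0\<^sub>v (p - r)"
  shows "\<exists>y\<in>carrier_vec (p * (k - 1) + r). x = bold_alpha p k \<alpha> *\<^sub>v y"
proof -
  define m where "m = p * (k - 1)"
  have kp: "k * p = p + m" unfolding m_def using k by (cases k) auto
  define x1 x2 where "x1 = vec_first x p" and "x2 = vec_last x m"
  have x1: "x1 \<in> carrier_vec p" and x2: "x2 \<in> carrier_vec m" unfolding x1_def x2_def by auto
  have x_split: "x = x1 @\<^sub>v x2" using x kp unfolding x1_def x2_def by simp
  \<comment> \<open>\<open>z = x1 - E\<^sup>T x2\<close> is killed by \<open>\<alpha>p\<^sup>T\<close>, so \<open>z = \<alpha> w\<close>, and then \<open>x = bold_alpha (w, x2)\<close>\<close>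
  let ?E = "E_mat p k" and ?S = "1\<^sub>m p @\<^sub>r - E_mat p k"
  have E: "?E \<in> carrier_mat m p" unfolding E_mat_def m_def by simp
  define z where "z = transpose_mat ?S *\<^sub>v x"
  have S: "?S \<in> carrier_mat (p + m) p" using E by auto
  have z: "z \<in> carrier_vec p"
    unfolding z_def by (rule mult_mat_vec_carrier[of _ p "p + m"]) (use S x kp in auto)
  have z_eq: "z = x1 + - (transpose_mat ?E *\<^sub>v x2)"
    unfolding z_def x_split
    using transpose_append_rows_mult_vec[of "1\<^sub>m p" p p "- ?E" m x1 x2] E x1 x2
    by (simp add: transpose_uminus)
  have "transpose_mat (bold_alpha_perp p k \<alpha>p) = transpose_mat \<alpha>p * transpose_mat ?S"
    unfolding bold_alpha_perp_def by (rule transpose_mult[OF S \<alpha>p(1)])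
  then have "transpose_mat \<alpha>p *\<^sub>v z = 0\<^sub>v (p - r)"
    using hx S \<alpha>p x kp unfolding z_def by simp
  then obtain w where w: "w \<in> carrier_vec r" and zw: "z = \<alpha> *\<^sub>v w"
    using orthogonal_complement_kernel_subset_range[OF \<alpha> \<alpha>p _ orth z] rp by auto
  have "bold_alpha p k \<alpha> *\<^sub>v (w @\<^sub>v x2)
      = (\<alpha> *\<^sub>v w + transpose_mat ?E *\<^sub>v x2) @\<^sub>v (0\<^sub>m m r *\<^sub>v w + 1\<^sub>m m *\<^sub>v x2)"
    unfolding bold_alpha_def using \<alpha> E w x2 m_def
    by (subst four_block_mat_mult_vec) auto
  also have "\<alpha> *\<^sub>v w + transpose_mat ?E *\<^sub>v x2 = x1"
    using z_eq x1 E x2 unfolding zw[symmetric] by (intro eq_vecI) auto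
  also have "0\<^sub>m m r *\<^sub>v w + 1\<^sub>m m *\<^sub>v x2 = x2" using w x2 by simp
  finally have "x = bold_alpha p k \<alpha> *\<^sub>v (w @\<^sub>v x2)" using x_split by simp
  moreover have "w @\<^sub>v x2 \<in> carrier_vec (p * (k - 1) + r)"
    using append_carrier_vec[OF w x2] m_def by (simp add: add.commute)
  ultimately show ?thesis by blast
qed

lemma det_append_rows_bold_alpha_perp_ne_0:
  fixes \<alpha> \<alpha>p \<beta> :: "real mat"
  assumes k: "k \<ge> 1" and rp: "r \<le> p"
    and \<alpha>: "\<alpha> \<in> carrier_mat p r" "vec_space.rank p \<alpha> = r"
    and \<alpha>p: "\<alpha>p \<in> carrier_mat p (p - r)" "vec_space.rank p \<alpha>p = p - r"
    and orth: "transpose_mat \<alpha>p * \<alpha> = 0\<^sub>m (p - r) r"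
    and \<beta>: "\<beta> \<in> carrier_mat (k * p) (p * (k - 1) + r)"
    and no_fix: "\<not> eigenvalue (1\<^sub>m (p * (k - 1) + r) + transpose_mat \<beta> * bold_alpha p k \<alpha>) 1"
  shows "det (transpose_mat (bold_alpha_perp p k \<alpha>p) @\<^sub>r transpose_mat \<beta>) \<noteq> 0"
proof -
  define N where "N = p * (k - 1) + r"
  let ?T = "transpose_mat (bold_alpha_perp p k \<alpha>p)" and ?B = "bold_alpha p k \<alpha>"
  have kp: "k * p = p - r + N" unfolding N_def using k rp by (cases k) auto
  have T: "?T \<in> carrier_mat (p - r) (k * p)" using bold_alpha_perp_carrier[OF k \<alpha>p(1)] by simp
  have B: "?B \<in> carrier_mat (k * p) N" using bold_alpha_carrier[OF k \<alpha>(1)] N_def by simp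
  have \<beta>T: "transpose_mat \<beta> \<in> carrier_mat N (k * p)" using \<beta> N_def by simp
  have G: "?T @\<^sub>r transpose_mat \<beta> \<in> carrier_mat (k * p) (k * p)"
    using carrier_append_rows[OF T \<beta>T] kp by simp
  have "x = 0\<^sub>v (k * p)"
    if x: "x \<in> carrier_vec (k * p)" and Gx: "(?T @\<^sub>r transpose_mat \<beta>) *\<^sub>v x = 0\<^sub>v (k * p)" for x
  proof -
    have "(?T *\<^sub>v x) @\<^sub>v (transpose_mat \<beta> *\<^sub>v x) = 0\<^sub>v (p - r) @\<^sub>v 0\<^sub>v N"
      using Gx mat_mult_append[OF T \<beta>T x] kp by (auto simp: zero_vec_def)
    then have Tx: "?T *\<^sub>v x = 0\<^sub>v (p - r)" and \<beta>x: "transpose_mat \<beta> *\<^sub>v x = 0\<^sub>v N"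
      using append_vec_eq[OF mult_mat_vec_carrier[OF T x] zero_carrier_vec] by auto
    obtain y where y: "y \<in> carrier_vec N" and xy: "x = ?B *\<^sub>v y"
      using bold_alpha_perp_kernel_subset_range[OF k rp \<alpha> \<alpha>p orth x Tx] N_def by auto
    have "(1\<^sub>m N + transpose_mat \<beta> * ?B) *\<^sub>v y = y + transpose_mat \<beta> *\<^sub>v x"
      using add_mult_distrib_mat_vec[of "1\<^sub>m N" N N "transpose_mat \<beta> * ?B" y] \<beta>T B y xy
      by simp
    then have "(1\<^sub>m N + transpose_mat \<beta> * ?B) *\<^sub>v y = 1 \<cdot>\<^sub>v y" using \<beta>x y by simp
    then have "y = 0\<^sub>v N"
      using no_fix y \<beta>T B unfolding eigenvalue_def eigenvector_def N_def by auto
    then show ?thesis using xy B by simp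
  qed
  then show ?thesis using det_0_iff_vec_prod_zero_field[OF G] by blast
qed

section \<open>Uniform bound on the inverses\<close>

lemma abs_det_le:
  fixes A :: "real mat"
  assumes A: "A \<in> carrier_mat n n" and bnd: "\<And>i j. i < n \<Longrightarrow> j < n \<Longrightarrow> \<bar>A $$ (i,j)\<bar> \<le> K"
  shows "\<bar>det A\<bar> \<le> fact n * K ^ n"
proof -
  have "\<bar>det A\<bar> \<le> (\<Sum>p \<in> {p. p permutes {0..<n}}. \<bar>signof p * (\<Prod>i = 0..<n. A $$ (i, p i))\<bar>)"
    unfolding det_def'[OF A] by (rule sum_abs)
  also have "\<dots> \<le> (\<Sum>p \<in> {p. p permutes {0..<n}}. K ^ n)"
  proof (rule sum_mono)
    fix p assume p: "p \<in> {p. p permutes {0..<n}}"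
    have "\<bar>signof p * (\<Prod>i = 0..<n. A $$ (i, p i))\<bar> = (\<Prod>i = 0..<n. \<bar>A $$ (i, p i)\<bar>)"
      by (simp add: abs_mult abs_prod sign_def)
    also have "\<dots> \<le> (\<Prod>i = 0..<n. K)"
      by (rule prod_mono) (use p bnd permutes_nat_less[of p n] in auto)
    finally show "\<bar>signof p * (\<Prod>i = 0..<n. A $$ (i, p i))\<bar> \<le> K ^ n" by simp
  qed
  also have "\<dots> = fact n * K ^ n" using card_permutations[of "{0..<n}" n] by simp
  finally show ?thesis .
qed

lemma abs_cofactor_le:
  fixes A :: "real mat"
  assumes A: "A \<in> carrier_mat n n" and bnd: "\<And>i j. i < n \<Longrightarrow> j < n \<Longrightarrow> \<bar>A $$ (i,j)\<bar> \<le> K"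
  shows "\<bar>cofactor A a b\<bar> \<le> fact (n - 1) * K ^ (n - 1)"
proof -
  have "\<bar>det (mat_delete A a b)\<bar> \<le> fact (n - 1) * K ^ (n - 1)"
    by (rule abs_det_le[OF mat_delete_carrier[OF A]])
      (use A in \<open>auto simp: mat_delete_def intro!: bnd\<close>)
  then show ?thesis unfolding cofactor_def by (simp add: abs_mult)
qed

lemma op_norm_inverse_le:
  fixes A N :: "real mat"
  assumes A: "A \<in> carrier_mat n n" and bnd: "\<And>i j. i < n \<Longrightarrow> j < n \<Longrightarrow> \<bar>A $$ (i,j)\<bar> \<le> K"
    and \<delta>: "0 < \<delta>" "\<delta> \<le> \<bar>det A\<bar>"
    and AN: "inverts_mat A N" and NA: "inverts_mat N A"
  shows "op_norm N \<le> real n * real n * (fact (n - 1) * K ^ (n - 1) / \<delta>)"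
proof (rule op_norm_le_of_abs_index_le)
  note N_eq = inverse_eq_scaled_adj_mat[OF A AN NA]
  have num: "0 \<le> fact (n - 1) * K ^ (n - 1)"
  proof (cases n)
    case (Suc n')
    then have "0 \<le> K" using bnd[of 0 0] by (meson abs_ge_zero order_trans zero_less_Suc)
    then show ?thesis by simp
  qed simp
  show "N \<in> carrier_mat n n" using N_eq(2) adj_mat(1)[OF A] by simp
  show "0 \<le> fact (n - 1) * K ^ (n - 1) / \<delta>" using num \<delta> by simp
  fix i j assume i: "i < n" and j: "j < n"
  have "\<bar>N $$ (i,j)\<bar> = \<bar>cofactor A j i\<bar> / \<bar>det A\<bar>"
    using N_eq(2) i j A by (simp add: adj_mat_def abs_divide)
  also have "\<dots> \<le> fact (n - 1) * K ^ (n - 1) / \<bar>det A\<bar>"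
    using abs_cofactor_le[OF A bnd] by (simp add: divide_right_mono)
  also have "\<dots> \<le> fact (n - 1) * K ^ (n - 1) / \<delta>"
    using num \<delta> by (intro divide_left_mono) auto
  finally show "\<bar>N $$ (i,j)\<bar> \<le> fact (n - 1) * K ^ (n - 1) / \<delta>" .
qed

lemma bounded_entries_convergent_subseq_on:
  fixes X :: "nat \<Rightarrow> real mat"
  assumes bnd: "\<And>m i j. i < nr \<Longrightarrow> j < nc \<Longrightarrow> \<bar>X m $$ (i,j)\<bar> \<le> K"
    and I: "finite I" "I \<subseteq> {..<nr} \<times> {..<nc}"
  shows "\<exists>s. strict_mono s \<and> (\<forall>(i,j)\<in>I. convergent (\<lambda>m. X (s m) $$ (i,j)))"
  using I
proof (induction I rule: finite_induct)
  case empty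
  show ?case by (intro exI[of _ id]) (auto simp: strict_mono_def)
next
  case (insert ij I)
  obtain a b where ij: "ij = (a,b)" by (cases ij)
  have ab: "a < nr" "b < nc" using insert.prems ij by auto
  obtain s where s: "strict_mono s" "\<forall>(i,j)\<in>I. convergent (\<lambda>m. X (s m) $$ (i,j))"
    using insert by auto
  have "bounded (range (\<lambda>m. X (s m) $$ (a,b)))"
    unfolding bounded_iff using bnd[OF ab] by (intro exI[of _ K]) auto
  then obtain t l where t: "strict_mono t" "((\<lambda>m. X (s m) $$ (a,b)) \<circ> t) \<longlonglongrightarrow> l"
    using bounded_imp_convergent_subsequence by blast
  have "convergent (\<lambda>m. X ((s \<circ> t) m) $$ (i,j))" if "(i,j) \<in> insert ij I" for i j
  proof (cases "(i,j) = (a,b)")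
    case True
    then show ?thesis using t(2) unfolding convergent_def o_def by auto
  next
    case False
    then have "convergent (\<lambda>m. X (s m) $$ (i,j))" using that s(2) ij by auto
    from convergent_subseq_convergent[OF this t(1)] show ?thesis by (simp add: o_def)
  qed
  then show ?case using strict_mono_o[OF s(1) t(1)] by blast
qed

lemma closed_mat_set_convergent_subseq:
  fixes X :: "nat \<Rightarrow> real mat"
  assumes S: "closed_mat_set nr nc S"
    and bnd: "\<forall>A\<in>S. \<forall>i<nr. \<forall>j<nc. \<bar>A $$ (i,j)\<bar> \<le> K" and X: "\<And>m. X m \<in> S"
  obtains s L where "strict_mono s" "L \<in> S"
    "\<And>i j. i < nr \<Longrightarrow> j < nc \<Longrightarrow> (\<lambda>m. X (s m) $$ (i,j)) \<longlonglongrightarrow> L $$ (i,j)"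
proof -
  have "\<bar>X m $$ (i,j)\<bar> \<le> K" if "i < nr" "j < nc" for m i j
    using bnd X that by blast
  then have "\<exists>s. strict_mono s \<and> (\<forall>(i,j)\<in>{..<nr} \<times> {..<nc}. convergent (\<lambda>m. X (s m) $$ (i,j)))"
    by (rule bounded_entries_convergent_subseq_on) auto
  then obtain s where s: "strict_mono s"
    and conv: "\<forall>(i,j)\<in>{..<nr} \<times> {..<nc}. convergent (\<lambda>m. X (s m) $$ (i,j))"
    by blast
  define L where "L = mat nr nc (\<lambda>(i,j). lim (\<lambda>m. X (s m) $$ (i,j)))"
  have lim: "(\<lambda>m. X (s m) $$ (i,j)) \<longlonglongrightarrow> L $$ (i,j)" if ij: "i < nr" "j < nc" for i j
  proof -
    have "convergent (\<lambda>m. X (s m) $$ (i,j))" using conv ij by blast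
    then show ?thesis unfolding L_def convergent_LIMSEQ_iff using ij by simp
  qed
  have "L \<in> S"
    using S[unfolded closed_mat_set_def, THEN conjunct2, rule_format, of "\<lambda>m. X (s m)" L] X lim
    unfolding L_def by simp
  then show ?thesis by (rule that[OF s _ lim])
qed

lemma tendsto_det_mat:
  fixes A :: "nat \<Rightarrow> real mat"
  assumes A: "\<And>m. A m \<in> carrier_mat n n" and L: "L \<in> carrier_mat n n"
    and conv: "\<And>i j. i < n \<Longrightarrow> j < n \<Longrightarrow> (\<lambda>m. A m $$ (i,j)) \<longlonglongrightarrow> L $$ (i,j)"
  shows "(\<lambda>m. det (A m)) \<longlonglongrightarrow> det L"
proof -
  have "(\<lambda>m. \<Sum>p \<in> {p. p permutes {0..<n}}. signof p * (\<Prod>i = 0..<n. A m $$ (i, p i)))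
     \<longlonglongrightarrow> (\<Sum>p \<in> {p. p permutes {0..<n}}. signof p * (\<Prod>i = 0..<n. L $$ (i, p i)))"
  proof (intro tendsto_sum tendsto_mult tendsto_const tendsto_prod)
    fix p i assume "p \<in> {p. p permutes {0..<n}}" "i \<in> {0..<n}"
    then have "i < n" "p i < n" using permutes_nat_less[of p n i] by auto
    then show "(\<lambda>m. A m $$ (i, p i)) \<longlonglongrightarrow> L $$ (i, p i)" by (rule conv)
  qed
  then show ?thesis using det_def'[OF A] det_def'[OF L] by simp
qed

lemma closed_mat_set_bounded_away_from_0:
  fixes f :: "real mat \<Rightarrow> real"
  assumes S: "closed_mat_set nr nc S"
    and bnd: "\<forall>A\<in>S. \<forall>i<nr. \<forall>j<nc. \<bar>A $$ (i,j)\<bar> \<le> K"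
    and cont: "\<And>X L. (\<And>m. X m \<in> S) \<Longrightarrow> L \<in> S \<Longrightarrow>
      (\<And>i j. i < nr \<Longrightarrow> j < nc \<Longrightarrow> (\<lambda>m. X m $$ (i,j)) \<longlonglongrightarrow> L $$ (i,j)) \<Longrightarrow>
      (\<lambda>m. f (X m)) \<longlonglongrightarrow> f L"
    and nz: "\<forall>A\<in>S. f A \<noteq> 0"
  shows "\<exists>\<delta>>0. \<forall>A\<in>S. \<delta> \<le> \<bar>f A\<bar>"
proof (rule ccontr)
  assume neg: "\<not> ?thesis"
  have "\<forall>m. \<exists>A. A \<in> S \<and> \<bar>f A\<bar> < inverse (real (Suc m))"
  proof
    fix m
    have "0 < inverse (real (Suc m))" by simp
    then show "\<exists>A. A \<in> S \<and> \<bar>f A\<bar> < inverse (real (Suc m))" using neg not_le by blast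
  qed
  then obtain X where X_S: "\<forall>m. X m \<in> S \<and> \<bar>f (X m)\<bar> < inverse (real (Suc m))"
    by (auto simp: choice_iff)
  then have X: "\<And>m. X m \<in> S" and small: "\<And>m. \<bar>f (X m)\<bar> < inverse (real (Suc m))" by auto
  obtain s L where s: "strict_mono s" and L: "L \<in> S"
    and lim: "\<And>i j. i < nr \<Longrightarrow> j < nc \<Longrightarrow> (\<lambda>m. X (s m) $$ (i,j)) \<longlonglongrightarrow> L $$ (i,j)"
    using closed_mat_set_convergent_subseq[where X = X, OF S bnd X] by metis
  have "(\<lambda>m. f (X (s m))) \<longlonglongrightarrow> f L" by (rule cont[of "\<lambda>m. X (s m)", OF X L lim])
  moreover have "(\<lambda>m. f (X (s m))) \<longlonglongrightarrow> 0"
  proof (rule Lim_null_comparison)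
    have "norm (f (X (s m))) \<le> inverse (real (Suc m))" for m
    proof -
      have "norm (f (X (s m))) \<le> inverse (real (Suc (s m)))" using small[of "s m"] by simp
      also have "\<dots> \<le> inverse (real (Suc m))"
        using seq_suble[OF s, of m] by (simp add: field_simps)
      finally show ?thesis .
    qed
    then show "\<forall>\<^sub>F m in sequentially. norm (f (X (s m))) \<le> inverse (real (Suc m))" by simp
    show "(\<lambda>m. inverse (real (Suc m))) \<longlonglongrightarrow> 0" by (rule LIMSEQ_inverse_real_of_nat)
  qed
  ultimately have "f L = 0" by (rule LIMSEQ_unique)
  then show False using nz L by blast
qed

lemma abs_index_append_rows_transpose_le:
  fixes T :: "real mat"
  assumes T: "T \<in> carrier_mat q n" and B: "B \<in> carrier_mat n nc" and qn: "q + nc = n"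
    and ij: "i < n" "j < n"
  shows "\<bar>(T @\<^sub>r transpose_mat B) $$ (i,j)\<bar> \<le> max (op_norm T) (op_norm B)"
proof (cases "i < q")
  case True
  then have "\<bar>T $$ (i,j)\<bar> \<le> op_norm T" using T ij by (intro abs_index_le_op_norm) auto
  then show ?thesis using True T B ij qn by (simp add: index_append_rows_transpose)
next
  case False
  then have "\<bar>B $$ (j, i - q)\<bar> \<le> op_norm B" using B ij qn by (intro abs_index_le_op_norm) auto
  then show ?thesis using False T B ij qn by (simp add: index_append_rows_transpose)
qed

lemma tendsto_det_append_rows_transpose:
  fixes T :: "real mat"
  assumes T: "T \<in> carrier_mat q n" and qn: "q + nc = n"
    and X: "\<And>m. X m \<in> carrier_mat n nc" and L: "L \<in> carrier_mat n nc"
    and lim: "\<And>i j. i < n \<Longrightarrow> j < nc \<Longrightarrow> (\<lambda>m. X m $$ (i,j)) \<longlonglongrightarrow> L $$ (i,j)"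
  shows "(\<lambda>m. det (T @\<^sub>r transpose_mat (X m))) \<longlonglongrightarrow> det (T @\<^sub>r transpose_mat L)"
proof (rule tendsto_det_mat)
  show "T @\<^sub>r transpose_mat (X m) \<in> carrier_mat n n" for m using T X qn by (metis carrier_append_rows transpose_carrier_mat)
  show "T @\<^sub>r transpose_mat L \<in> carrier_mat n n" using T L qn by (metis carrier_append_rows transpose_carrier_mat)
  fix i j assume ij: "i < n" "j < n"
  have "(T @\<^sub>r transpose_mat (X m)) $$ (i,j) = (if i < q then T $$ (i,j) else X m $$ (j, i - q))" for m
    by (rule index_append_rows_transpose[OF T X]) (use ij qn in auto)
  moreover have "(T @\<^sub>r transpose_mat L) $$ (i,j) = (if i < q then T $$ (i,j) else L $$ (j, i - q))"
    by (rule index_append_rows_transpose[OF T L]) (use ij qn in auto)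
  ultimately show "(\<lambda>m. (T @\<^sub>r transpose_mat (X m)) $$ (i,j)) \<longlonglongrightarrow> (T @\<^sub>r transpose_mat L) $$ (i,j)"
    using lim ij qn by auto
qed

lemma uniformly_bounded_inverses:
  fixes T :: "real mat"
  assumes S: "closed_mat_set n nc S" and b: "\<forall>B\<in>S. op_norm B \<le> b"
    and T: "T \<in> carrier_mat q n" and qn: "q + nc = n"
    and nz: "\<forall>B\<in>S. det (T @\<^sub>r transpose_mat B) \<noteq> 0"
  shows "\<exists>C. \<forall>B\<in>S. \<forall>N. inverts_mat (T @\<^sub>r transpose_mat B) N \<and> inverts_mat N (T @\<^sub>r transpose_mat B)
      \<longrightarrow> op_norm N \<le> C"
proof -
  let ?G = "\<lambda>B. T @\<^sub>r transpose_mat B"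
  have S_carrier: "B \<in> carrier_mat n nc" if "B \<in> S" for B
    using S that unfolding closed_mat_set_def by auto
  have G: "?G B \<in> carrier_mat n n" if "B \<in> S" for B
    using T S_carrier[OF that] qn by (metis carrier_append_rows transpose_carrier_mat)
  have B_bnd: "\<forall>B\<in>S. \<forall>i<n. \<forall>j<nc. \<bar>B $$ (i,j)\<bar> \<le> b"
    using abs_index_le_op_norm S_carrier b by (smt (verit) carrier_matD)
  define K where "K = max (op_norm T) b"
  have G_bnd: "\<bar>?G B $$ (i,j)\<bar> \<le> K" if "B \<in> S" "i < n" "j < n" for B i j
    using abs_index_append_rows_transpose_le[OF T S_carrier qn, of B i j] b that
    unfolding K_def by fastforce
  obtain \<delta> where \<delta>: "\<delta> > 0" "\<forall>B\<in>S. \<delta> \<le> \<bar>det (?G B)\<bar>"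
    using closed_mat_set_bounded_away_from_0[OF S B_bnd _ nz]
      tendsto_det_append_rows_transpose[OF T qn S_carrier S_carrier] by blast
  show ?thesis
  proof (intro exI allI ballI impI)
    fix B N assume "B \<in> S" and "inverts_mat (?G B) N \<and> inverts_mat N (?G B)"
    then show "op_norm N \<le> real n * real n * (fact (n - 1) * K ^ (n - 1) / \<delta>)"
      using op_norm_inverse_le[OF G G_bnd \<delta>(1)] \<delta>(2) by blast
  qed
qed

theorem lemmaB3:
  fixes p k r :: nat and \<alpha> \<alpha>perp :: "real mat" and bbar :: real and \<rho>bar :: real
    and \<B> :: "real mat set"
  assumes "p \<ge> 1" and "k \<ge> 1" and "r < p"
    and "\<alpha> \<in> carrier_mat p r" and "vec_space.rank p \<alpha> = r"
    and "\<alpha>perp \<in> carrier_mat p (p - r)" and "vec_space.rank p \<alpha>perp = p - r"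
    and "transpose_mat \<alpha>perp * \<alpha> = 0\<^sub>m (p - r) r"
    and "closed_mat_set (k*p) (p*(k-1) + r) \<B>"
    and "\<forall>\<beta>\<in>\<B>. op_norm \<beta> \<le> bbar"
    and "jsr (p*(k-1) + r)
           ((\<lambda>\<beta>. 1\<^sub>m (p*(k-1) + r) + transpose_mat \<beta> * bold_alpha p k \<alpha>) ` \<B>) \<le> ereal \<rho>bar"
    and "\<rho>bar < 1"
  shows "(\<forall>\<beta>\<in>\<B>. invertible_mat (transpose_mat (bold_alpha_perp p k \<alpha>perp) @\<^sub>r transpose_mat \<beta>))
       \<and> (\<exists>C. \<forall>\<beta>\<in>\<B>. \<forall>N.
             inverts_mat (transpose_mat (bold_alpha_perp p k \<alpha>perp) @\<^sub>r transpose_mat \<beta>) N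
             \<and> inverts_mat N (transpose_mat (bold_alpha_perp p k \<alpha>perp) @\<^sub>r transpose_mat \<beta>)
             \<longrightarrow> op_norm N \<le> C)"
proof -
  let ?T = "transpose_mat (bold_alpha_perp p k \<alpha>perp)"
  have dims: "p - r + (p * (k - 1) + r) = k * p" using assms(2,3) by (cases k) auto
  have T: "?T \<in> carrier_mat (p - r) (k * p)"
    using bold_alpha_perp_carrier[OF assms(2,6)] by simp
  have \<beta>: "\<beta> \<in> carrier_mat (k * p) (p * (k - 1) + r)" if "\<beta> \<in> \<B>" for \<beta>
    using assms(9) that unfolding closed_mat_set_def by auto
  have no_fix: "\<not> eigenvalue (1\<^sub>m (p * (k - 1) + r) + transpose_mat \<beta> * bold_alpha p k \<alpha>) 1"
    if "\<beta> \<in> \<B>" for \<beta>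
  proof
    assume "eigenvalue (1\<^sub>m (p * (k - 1) + r) + transpose_mat \<beta> * bold_alpha p k \<alpha>) 1"
    then have "1 \<le> jsr (p * (k - 1) + r)
        ((\<lambda>\<beta>. 1\<^sub>m (p * (k - 1) + r) + transpose_mat \<beta> * bold_alpha p k \<alpha>) ` \<B>)"
      using that \<beta>[OF that] bold_alpha_carrier[OF assms(2,4)]
      by (intro one_le_jsr_if_eigenvalue_one) auto
    then have "(1::ereal) \<le> ereal \<rho>bar" using assms(11) by (rule order.trans)
    then show False using assms(12) by simp
  qed
  have det: "det (?T @\<^sub>r transpose_mat \<beta>) \<noteq> 0" if "\<beta> \<in> \<B>" for \<beta>
    using det_append_rows_bold_alpha_perp_ne_0[OF assms(2) _ assms(4-8) \<beta>[OF that] no_fix[OF that]] assms(3) by simp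
  have "invertible_mat (?T @\<^sub>r transpose_mat \<beta>)" if "\<beta> \<in> \<B>" for \<beta>
    using invertible_mat_if_det_ne_0[OF _ det[OF that]] carrier_append_rows[OF T] \<beta>[OF that] dims
    by (metis transpose_carrier_mat)
  moreover have "\<exists>C. \<forall>\<beta>\<in>\<B>. \<forall>N. inverts_mat (?T @\<^sub>r transpose_mat \<beta>) N
      \<and> inverts_mat N (?T @\<^sub>r transpose_mat \<beta>) \<longrightarrow> op_norm N \<le> C"
    using uniformly_bounded_inverses[OF assms(9,10) T dims] det by blast
  ultimately show ?thesis by blast
qed

end
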